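(* Let $L$ be an infinite dimensional Lie algebra over a field $F$ generated by elements $a_1,\dots,a_m$ such that every element of the Lie set $S\langle a_1,\dots,a_m\rangle$ is ad-nilpotent. Then $L$ has a just infinite homomorphic image.
   Context: An element $a\in L$ is ad-nilpotent if $\operatorname{ad}(a):x\mapsto[x,a]$ is nilpotent. $S\langle a_1,\dots,a_m\rangle$ is the smallest subset containing the $a_i$ and closed under the bracket. An algebra is just infinite if it is infinite dimensional but every nonzero ideal has finite codimension. *)

theory Defs
  imports Main
begin

record ('k, 'b) lie_alg =
  lcarrier :: "'b set"
  ladd :: "'b \<Rightarrow> 'b \<Rightarrow> 'b"
  lzero :: "'b"
  lsmul :: "'k \<Rightarrow> 'b \<Rightarrow> 'b"
  lbr :: "'b \<Rightarrow> 'b \<Rightarrow> 'b"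

definition lie_algebra :: "('k::field, 'b) lie_alg \<Rightarrow> bool" where
  "lie_algebra L \<longleftrightarrow>
    (let C = lcarrier L; add = ladd L; z = lzero L; sm = lsmul L; br = lbr L in
     z \<in> C \<and>
     (\<forall>x\<in>C. \<forall>y\<in>C. add x y \<in> C) \<and>
     (\<forall>c. \<forall>x\<in>C. sm c x \<in> C) \<and>
     (\<forall>x\<in>C. \<forall>y\<in>C. br x y \<in> C) \<and>
     (\<forall>x\<in>C. \<forall>y\<in>C. \<forall>w\<in>C. add (add x y) w = add x (add y w)) \<and>
     (\<forall>x\<in>C. \<forall>y\<in>C. add x y = add y x) \<and>
     (\<forall>x\<in>C. add z x = x) \<and>
     (\<forall>x\<in>C. \<exists>y\<in>C. add x y = z) \<and>
     (\<forall>c. \<forall>x\<in>C. \<forall>y\<in>C. sm c (add x y) = add (sm c x) (sm c y)) \<and>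
     (\<forall>c d. \<forall>x\<in>C. sm (c + d) x = add (sm c x) (sm d x)) \<and>
     (\<forall>c d. \<forall>x\<in>C. sm (c * d) x = sm c (sm d x)) \<and>
     (\<forall>x\<in>C. sm 1 x = x) \<and>
     (\<forall>x\<in>C. \<forall>y\<in>C. \<forall>w\<in>C. br (add x y) w = add (br x w) (br y w)) \<and>
     (\<forall>x\<in>C. \<forall>y\<in>C. \<forall>w\<in>C. br w (add x y) = add (br w x) (br w y)) \<and>
     (\<forall>c. \<forall>x\<in>C. \<forall>y\<in>C. br (sm c x) y = sm c (br x y)) \<and>
     (\<forall>c. \<forall>x\<in>C. \<forall>y\<in>C. br x (sm c y) = sm c (br x y)) \<and>
     (\<forall>x\<in>C. br x x = z) \<and>
     (\<forall>x\<in>C. \<forall>y\<in>C. \<forall>w\<in>C.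
        add (add (br (br x y) w) (br (br y w) x)) (br (br w x) y) = z))"

inductive_set lspan :: "('k, 'b) lie_alg \<Rightarrow> 'b set \<Rightarrow> 'b set"
  for L :: "('k, 'b) lie_alg" and A :: "'b set" where
  span_zero: "lzero L \<in> lspan L A"
| span_base: "a \<in> A \<Longrightarrow> a \<in> lspan L A"
| span_add: "x \<in> lspan L A \<Longrightarrow> y \<in> lspan L A \<Longrightarrow> ladd L x y \<in> lspan L A"
| span_smul: "x \<in> lspan L A \<Longrightarrow> lsmul L c x \<in> lspan L A"

inductive_set lie_gen :: "('k, 'b) lie_alg \<Rightarrow> 'b set \<Rightarrow> 'b set"
  for L :: "('k, 'b) lie_alg" and A :: "'b set" where
  gen_zero: "lzero L \<in> lie_gen L A"
| gen_base: "a \<in> A \<Longrightarrow> a \<in> lie_gen L A"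
| gen_add: "x \<in> lie_gen L A \<Longrightarrow> y \<in> lie_gen L A \<Longrightarrow> ladd L x y \<in> lie_gen L A"
| gen_smul: "x \<in> lie_gen L A \<Longrightarrow> lsmul L c x \<in> lie_gen L A"
| gen_br: "x \<in> lie_gen L A \<Longrightarrow> y \<in> lie_gen L A \<Longrightarrow> lbr L x y \<in> lie_gen L A"

inductive_set lie_set :: "('k, 'b) lie_alg \<Rightarrow> 'b set \<Rightarrow> 'b set"
  for L :: "('k, 'b) lie_alg" and A :: "'b set" where
  lset_base: "a \<in> A \<Longrightarrow> a \<in> lie_set L A"
| lset_br: "x \<in> lie_set L A \<Longrightarrow> y \<in> lie_set L A \<Longrightarrow> lbr L x y \<in> lie_set L A"

definition ad_nilpotent :: "('k, 'b) lie_alg \<Rightarrow> 'b \<Rightarrow> bool" where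
  "ad_nilpotent L a \<longleftrightarrow>
     (\<exists>n::nat. \<forall>x\<in>lcarrier L. ((\<lambda>y. lbr L y a) ^^ n) x = lzero L)"

definition infinite_dimensional :: "('k, 'b) lie_alg \<Rightarrow> bool" where
  "infinite_dimensional L \<longleftrightarrow>
     \<not> (\<exists>B. finite B \<and> B \<subseteq> lcarrier L \<and> lcarrier L \<subseteq> lspan L B)"

definition lie_ideal :: "('k, 'b) lie_alg \<Rightarrow> 'b set \<Rightarrow> bool" where
  "lie_ideal L I \<longleftrightarrow>
     I \<subseteq> lcarrier L \<and> lzero L \<in> I \<and>
     (\<forall>x\<in>I. \<forall>y\<in>I. ladd L x y \<in> I) \<and>
     (\<forall>c. \<forall>x\<in>I. lsmul L c x \<in> I) \<and>
     (\<forall>x\<in>lcarrier L. \<forall>a\<in>I. lbr L x a \<in> I)"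

definition finite_codim :: "('k, 'b) lie_alg \<Rightarrow> 'b set \<Rightarrow> bool" where
  "finite_codim L I \<longleftrightarrow>
     (\<exists>B. finite B \<and> B \<subseteq> lcarrier L \<and> lcarrier L \<subseteq> lspan L (I \<union> B))"

definition just_infinite :: "('k, 'b) lie_alg \<Rightarrow> bool" where
  "just_infinite L \<longleftrightarrow> infinite_dimensional L \<and>
     (\<forall>I. lie_ideal L I \<and> I \<noteq> {lzero L} \<longrightarrow> finite_codim L I)"

definition lie_hom :: "('k, 'b) lie_alg \<Rightarrow> ('k, 'c) lie_alg \<Rightarrow> ('b \<Rightarrow> 'c) \<Rightarrow> bool" where
  "lie_hom L M f \<longleftrightarrow>
     (\<forall>x\<in>lcarrier L. f x \<in> lcarrier M) \<and>
     (\<forall>x\<in>lcarrier L. \<forall>y\<in>lcarrier L. f (ladd L x y) = ladd M (f x) (f y)) \<and>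
     (\<forall>c. \<forall>x\<in>lcarrier L. f (lsmul L c x) = lsmul M c (f x)) \<and>
     (\<forall>x\<in>lcarrier L. \<forall>y\<in>lcarrier L. f (lbr L x y) = lbr M (f x) (f y))"

end

theory Submission
  imports Defs
begin

text \<open>Call an ideal of infinite codimension maximal if every strictly larger ideal has finite
  codimension; the quotient by such an ideal is just infinite, because nonzero ideals of the
  quotient pull back to strictly larger ideals. Maximal ideals exist by Zorn's lemma, since the
  union of a chain of ideals of infinite codimension again has infinite codimension: in a finitely
  generated algebra every ideal \<open>J\<close> of finite codimension contains a finite set generating an
  ideal of finite codimension, and that finite set already lies in one member of the chain.\<close>

locale liealg =
  fixes L :: "('k::field, 'b) lie_alg"
  assumes lie_algebra: "lie_algebra L"
begin

abbreviation C where "C \<equiv> lcarrier L"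
abbreviation add (infixl \<open>\<oplus>\<close> 65) where "x \<oplus> y \<equiv> ladd L x y"
abbreviation zero (\<open>\<zero>\<close>) where "\<zero> \<equiv> lzero L"
abbreviation smul (infixr \<open>\<cdot>\<close> 75) where "c \<cdot> x \<equiv> lsmul L c x"
abbreviation br where "br \<equiv> lbr L"

lemma
  shows lzero_closed [simp]: "\<zero> \<in> C"
    and ladd_closed [simp, rule_format]: "\<forall>x\<in>C. \<forall>y\<in>C. x \<oplus> y \<in> C"
    and lsmul_closed [simp, rule_format]: "\<forall>c. \<forall>x\<in>C. c \<cdot> x \<in> C"
    and lbr_closed [simp, rule_format]: "\<forall>x\<in>C. \<forall>y\<in>C. br x y \<in> C"
    and ladd_assoc [rule_format]: "\<forall>x\<in>C. \<forall>y\<in>C. \<forall>z\<in>C. x \<oplus> y \<oplus> z = x \<oplus> (y \<oplus> z)"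
    and ladd_commute [rule_format]: "\<forall>x\<in>C. \<forall>y\<in>C. x \<oplus> y = y \<oplus> x"
    and lzero_ladd [simp, rule_format]: "\<forall>x\<in>C. \<zero> \<oplus> x = x"
    and ladd_right_inverse: "\<forall>x\<in>C. \<exists>y\<in>C. x \<oplus> y = \<zero>"
    and lsmul_ladd [rule_format]: "\<forall>c. \<forall>x\<in>C. \<forall>y\<in>C. c \<cdot> (x \<oplus> y) = c \<cdot> x \<oplus> c \<cdot> y"
    and lsmul_plus [rule_format]: "\<forall>c d. \<forall>x\<in>C. (c + d) \<cdot> x = c \<cdot> x \<oplus> d \<cdot> x"
    and lsmul_mult [rule_format]: "\<forall>c d. \<forall>x\<in>C. (c * d) \<cdot> x = c \<cdot> d \<cdot> x"
    and lsmul_one [simp, rule_format]: "\<forall>x\<in>C. 1 \<cdot> x = x"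
    and lbr_ladd_left [rule_format]:
      "\<forall>x\<in>C. \<forall>y\<in>C. \<forall>z\<in>C. br (x \<oplus> y) z = br x z \<oplus> br y z"
    and lbr_ladd_right [rule_format]:
      "\<forall>x\<in>C. \<forall>y\<in>C. \<forall>z\<in>C. br z (x \<oplus> y) = br z x \<oplus> br z y"
    and lbr_lsmul_left [rule_format]: "\<forall>c. \<forall>x\<in>C. \<forall>y\<in>C. br (c \<cdot> x) y = c \<cdot> br x y"
    and lbr_lsmul_right [rule_format]: "\<forall>c. \<forall>x\<in>C. \<forall>y\<in>C. br x (c \<cdot> y) = c \<cdot> br x y"
    and lbr_self [simp, rule_format]: "\<forall>x\<in>C. br x x = \<zero>"
    and jacobi: "\<forall>x\<in>C. \<forall>y\<in>C. \<forall>z\<in>C. br (br x y) z \<oplus> br (br y z) x \<oplus> br (br z x) y = \<zero>"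
  by (insert lie_algebra, unfold lie_algebra_def Let_def, (elim conjE, assumption)+)

lemma ladd_left_commute: "x \<in> C \<Longrightarrow> y \<in> C \<Longrightarrow> z \<in> C \<Longrightarrow> x \<oplus> (y \<oplus> z) = y \<oplus> (x \<oplus> z)"
  by (metis ladd_assoc ladd_commute)

lemma ladd_lzero [simp]: "x \<in> C \<Longrightarrow> x \<oplus> \<zero> = x"
  by (metis ladd_commute lzero_closed lzero_ladd)

lemma ladd_left_cancel:
  assumes "x \<in> C" "y \<in> C" "z \<in> C" "x \<oplus> y = x \<oplus> z"
  shows "y = z"
proof -
  obtain v where v: "v \<in> C" "x \<oplus> v = \<zero>" using ladd_right_inverse assms by blast
  have "y = v \<oplus> x \<oplus> y" using v assms by (simp add: ladd_commute)
  also have "\<dots> = v \<oplus> (x \<oplus> z)" using v assms by (simp add: ladd_assoc)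
  also have "\<dots> = z" using v assms by (simp add: ladd_assoc[symmetric] ladd_commute)
  finally show ?thesis .
qed

lemma ladd_idem_imp_lzero: "x \<in> C \<Longrightarrow> x \<oplus> x = x \<Longrightarrow> x = \<zero>"
  using ladd_left_cancel[of x x \<zero>] by simp

lemma lsmul_zero [simp]: "x \<in> C \<Longrightarrow> 0 \<cdot> x = \<zero>"
  by (rule ladd_idem_imp_lzero) (auto simp: lsmul_plus[of x 0 0, symmetric])

lemma lsmul_lzero [simp]: "c \<cdot> \<zero> = \<zero>"
  by (rule ladd_idem_imp_lzero) (auto simp: lsmul_ladd[of \<zero> \<zero> c, symmetric])

lemma lbr_lzero_left [simp]: "x \<in> C \<Longrightarrow> br \<zero> x = \<zero>"
  by (rule ladd_idem_imp_lzero) (auto simp: lbr_ladd_left[of \<zero> \<zero> x, symmetric])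

lemma lbr_lzero_right [simp]: "x \<in> C \<Longrightarrow> br x \<zero> = \<zero>"
  by (rule ladd_idem_imp_lzero) (auto simp: lbr_ladd_right[of \<zero> \<zero> x, symmetric])

lemma ladd_minus_one: "x \<in> C \<Longrightarrow> x \<oplus> (-1) \<cdot> x = \<zero>"
  using lsmul_plus[of x 1 "-1"] by simp

lemma lbr_anticommute:
  assumes "x \<in> C" "y \<in> C"
  shows "br x y = (-1) \<cdot> br y x"
proof -
  have "br y x \<oplus> br x y = br x x \<oplus> br y x \<oplus> (br x y \<oplus> br y y)"
    using assms by simp
  also have "\<dots> = br (x \<oplus> y) (x \<oplus> y)"
    using assms by (simp add: lbr_ladd_left lbr_ladd_right del: lbr_self)
  also have "\<dots> = br y x \<oplus> (-1) \<cdot> br y x"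
    using assms by (simp add: ladd_minus_one)
  finally show ?thesis by (rule ladd_left_cancel[rotated 3]) (simp_all add: assms)
qed

end

section \<open>Spans and subspaces\<close>

lemma lspan_mono:
  assumes "X \<subseteq> Y"
  shows "lspan M X \<subseteq> lspan M Y"
proof
  fix x assume "x \<in> lspan M X"
  then show "x \<in> lspan M Y" by induction (use assms in \<open>auto intro: lspan.intros\<close>)
qed

context liealg
begin

definition lsubspace :: "'b set \<Rightarrow> bool" where
  "lsubspace V \<longleftrightarrow> V \<subseteq> C \<and> \<zero> \<in> V \<and> (\<forall>x\<in>V. \<forall>y\<in>V. x \<oplus> y \<in> V) \<and> (\<forall>c. \<forall>x\<in>V. c \<cdot> x \<in> V)"

lemma lsubspaceD:
  assumes "lsubspace V"
  shows "V \<subseteq> C" "\<zero> \<in> V" "x \<in> V \<Longrightarrow> y \<in> V \<Longrightarrow> x \<oplus> y \<in> V" "x \<in> V \<Longrightarrow> c \<cdot> x \<in> V"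
  using assms unfolding lsubspace_def by blast+

lemma lspan_least:
  assumes "lsubspace V" "X \<subseteq> V"
  shows "lspan L X \<subseteq> V"
proof
  fix x assume "x \<in> lspan L X"
  then show "x \<in> V" by induction (use assms in \<open>auto dest: lsubspaceD\<close>)
qed

lemma lsubspace_lspan: "X \<subseteq> C \<Longrightarrow> lsubspace (lspan L X)"
proof -
  assume X: "X \<subseteq> C"
  have "lspan L X \<subseteq> C"
  proof
    fix x assume "x \<in> lspan L X"
    then show "x \<in> C" by induction (use X in auto)
  qed
  then show ?thesis unfolding lsubspace_def by (auto intro: lspan.intros)
qed

lemma lspan_subset_carrier: "X \<subseteq> C \<Longrightarrow> lspan L X \<subseteq> C"
  using lsubspace_lspan lsubspaceD(1) by blast

lemma lie_gen_least:
  assumes "lsubspace V" "\<And>x y. x \<in> V \<Longrightarrow> y \<in> V \<Longrightarrow> br x y \<in> V" "X \<subseteq> V"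
  shows "lie_gen L X \<subseteq> V"
proof
  fix x assume "x \<in> lie_gen L X"
  then show "x \<in> V" by induction (use assms in \<open>auto dest: lsubspaceD\<close>)
qed

lemma lbr_lspan_closed:
  assumes V: "lsubspace V" and B: "B \<subseteq> C"
    and gen: "\<And>b b'. b \<in> B \<Longrightarrow> b' \<in> B \<Longrightarrow> br b b' \<in> V"
    and s: "s \<in> lspan L B" and t: "t \<in> lspan L B"
  shows "br s t \<in> V"
proof -
  have span_C: "x \<in> C" if "x \<in> lspan L B" for x
    using lspan_subset_carrier[OF B] that by blast
  have right: "br b t \<in> V" if "b \<in> B" for b
    using t
  proof induction
    case (span_add x y)
    then show ?case
      using \<open>b \<in> B\<close> B span_C by (auto simp: lbr_ladd_right subset_iff intro: lsubspaceD[OF V])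
  next
    case (span_smul x c)
    then show ?case
      using \<open>b \<in> B\<close> B span_C by (auto simp: lbr_lsmul_right subset_iff intro: lsubspaceD[OF V])
  qed (use that B gen lsubspaceD[OF V] in auto)
  show ?thesis
    using s
  proof induction
    case (span_add x y)
    then show ?case using t span_C by (auto simp: lbr_ladd_left intro: lsubspaceD[OF V])
  next
    case (span_smul x c)
    then show ?case using t span_C by (auto simp: lbr_lsmul_left intro: lsubspaceD[OF V])
  qed (use t span_C right lsubspaceD[OF V] in auto)
qed

section \<open>Ideals of finite codimension\<close>

lemma lie_idealD:
  assumes "lie_ideal L I"
  shows "I \<subseteq> C" "\<zero> \<in> I" "x \<in> I \<Longrightarrow> y \<in> I \<Longrightarrow> x \<oplus> y \<in> I" "x \<in> I \<Longrightarrow> c \<cdot> x \<in> I"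
    "x \<in> C \<Longrightarrow> a \<in> I \<Longrightarrow> br x a \<in> I"
  using assms unfolding lie_ideal_def by blast+

lemma lie_ideal_lbr_right:
  assumes I: "lie_ideal L I" and "a \<in> I" "x \<in> C"
  shows "br a x \<in> I"
proof -
  have "br a x = (-1) \<cdot> br x a" using assms lie_idealD(1)[OF I] by (auto intro: lbr_anticommute)
  then show ?thesis using assms lie_idealD(4,5)[OF I] by auto
qed

lemma lie_ideal_carrier: "lie_ideal L C"
  unfolding lie_ideal_def by auto

lemma lie_ideal_lzero: "lie_ideal L {\<zero>}"
  unfolding lie_ideal_def by auto

lemma finite_codim_mono:
  assumes "I \<subseteq> J" "finite_codim L I"
  shows "finite_codim L J"
proof -
  obtain B where B: "finite B" "B \<subseteq> C" "C \<subseteq> lspan L (I \<union> B)"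
    using assms(2) unfolding finite_codim_def by blast
  moreover have "lspan L (I \<union> B) \<subseteq> lspan L (J \<union> B)"
    using assms(1) by (intro lspan_mono) blast
  ultimately show ?thesis unfolding finite_codim_def by blast
qed

lemma infinite_dimensional_imp_not_finite_codim_lzero:
  assumes "infinite_dimensional L"
  shows "\<not> finite_codim L {\<zero>}"
proof
  assume "finite_codim L {\<zero>}"
  then obtain B where B: "finite B" "B \<subseteq> C" "C \<subseteq> lspan L ({\<zero>} \<union> B)"
    unfolding finite_codim_def by auto
  have "lspan L ({\<zero>} \<union> B) \<subseteq> lspan L B"
    by (intro lspan_least lsubspace_lspan B(2)) (auto intro: lspan.intros)
  then show False using B assms unfolding infinite_dimensional_def by blast
qed

definition ideal_generated :: "'b set \<Rightarrow> 'b set" where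
  "ideal_generated F = \<Inter>{I. lie_ideal L I \<and> F \<subseteq> I}"

lemma lie_ideal_generated: "F \<subseteq> C \<Longrightarrow> lie_ideal L (ideal_generated F)"
  using lie_ideal_carrier unfolding ideal_generated_def lie_ideal_def by (auto 0 3)

lemma ideal_generated_superset: "F \<subseteq> ideal_generated F"
  unfolding ideal_generated_def by auto

lemma ideal_generated_least: "lie_ideal L J \<Longrightarrow> F \<subseteq> J \<Longrightarrow> ideal_generated F \<subseteq> J"
  unfolding ideal_generated_def by (rule Inter_lower) blast

lemma lie_ideal_Union_chain:
  assumes "subset.chain {I. lie_ideal L I} \<I>" "\<I> \<noteq> {}"
  shows "lie_ideal L (\<Union>\<I>)"
proof -
  have common: "\<exists>I\<in>\<I>. F \<subseteq> I" if "finite F" "F \<subseteq> \<Union>\<I>" for F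
    using finite_subset_Union_chain[OF that assms(2,1)] by blast
  have ideal: "lie_ideal L I" if "I \<in> \<I>" for I
    using assms(1) that unfolding subset_chain_def by blast
  show ?thesis
    unfolding lie_ideal_def
  proof (intro conjI ballI allI)
    show "\<Union>\<I> \<subseteq> C" using lie_idealD(1)[OF ideal] by blast
    show "\<zero> \<in> \<Union>\<I>" using lie_idealD(2)[OF ideal] assms(2) by blast
  next
    fix x y assume "x \<in> \<Union>\<I>" "y \<in> \<Union>\<I>"
    then obtain I where I: "I \<in> \<I>" "x \<in> I" "y \<in> I" using common[of "{x, y}"] by auto
    then have "x \<oplus> y \<in> I" using lie_idealD(3)[OF ideal] by blast
    then show "x \<oplus> y \<in> \<Union>\<I>" using I by blast
  next
    fix c x assume "x \<in> \<Union>\<I>"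
    then obtain I where I: "I \<in> \<I>" "x \<in> I" by blast
    then have "c \<cdot> x \<in> I" using lie_idealD(4)[OF ideal] by blast
    then show "c \<cdot> x \<in> \<Union>\<I>" using I by blast
  next
    fix x a assume "x \<in> C" "a \<in> \<Union>\<I>"
    then obtain I where I: "I \<in> \<I>" "a \<in> I" by blast
    then have "br x a \<in> I" using lie_idealD(5)[OF ideal] \<open>x \<in> C\<close> by blast
    then show "br x a \<in> \<Union>\<I>" using I by blast
  qed
qed

definition ideal_plus_span :: "'b set \<Rightarrow> 'b set \<Rightarrow> 'b set" where
  "ideal_plus_span I B = {i \<oplus> s | i s. i \<in> I \<and> s \<in> lspan L B}"

lemma ideal_plus_spanI: "i \<in> I \<Longrightarrow> s \<in> lspan L B \<Longrightarrow> i \<oplus> s \<in> ideal_plus_span I B"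
  unfolding ideal_plus_span_def by blast

context
  fixes I B
  assumes I: "lie_ideal L I" and B: "B \<subseteq> C"
begin

lemma ideal_plus_spanE:
  assumes "x \<in> ideal_plus_span I B"
  obtains i s where "i \<in> I" "s \<in> lspan L B" "i \<in> C" "s \<in> C" "x = i \<oplus> s"
proof -
  obtain i s where "i \<in> I" "s \<in> lspan L B" "x = i \<oplus> s"
    using assms unfolding ideal_plus_span_def by blast
  moreover from this have "i \<in> C" "s \<in> C"
    using lie_idealD(1)[OF I] lspan_subset_carrier[OF B] by auto
  ultimately show thesis using that by blast
qed

lemma lsubspace_ideal_plus_span: "lsubspace (ideal_plus_span I B)"
  unfolding lsubspace_def
proof (intro conjI ballI allI)
  show "ideal_plus_span I B \<subseteq> C"
    by (auto elim: ideal_plus_spanE)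
  have "\<zero> \<oplus> \<zero> \<in> ideal_plus_span I B"
    by (intro ideal_plus_spanI lie_idealD(2)[OF I] lspan.span_zero)
  then show "\<zero> \<in> ideal_plus_span I B" by simp
next
  fix x y assume "x \<in> ideal_plus_span I B" "y \<in> ideal_plus_span I B"
  then obtain i s j t where "i \<in> I" "s \<in> lspan L B" "j \<in> I" "t \<in> lspan L B"
    and C: "i \<in> C" "s \<in> C" "j \<in> C" "t \<in> C" and "x = i \<oplus> s" "y = j \<oplus> t"
    by (elim ideal_plus_spanE)
  moreover from C have "i \<oplus> s \<oplus> (j \<oplus> t) = (i \<oplus> j) \<oplus> (s \<oplus> t)"
    by (simp add: ladd_assoc ladd_left_commute)
  moreover have "(i \<oplus> j) \<oplus> (s \<oplus> t) \<in> ideal_plus_span I B"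
    by (intro ideal_plus_spanI lie_idealD(3)[OF I] lspan.span_add) fact+
  ultimately show "x \<oplus> y \<in> ideal_plus_span I B" by simp
next
  fix c x assume "x \<in> ideal_plus_span I B"
  then obtain i s where "i \<in> I" "s \<in> lspan L B" "i \<in> C" "s \<in> C" "x = i \<oplus> s"
    by (elim ideal_plus_spanE)
  moreover from this have "c \<cdot> x = c \<cdot> i \<oplus> c \<cdot> s" by (simp add: lsmul_ladd)
  moreover have "c \<cdot> i \<oplus> c \<cdot> s \<in> ideal_plus_span I B"
    by (intro ideal_plus_spanI lie_idealD(4)[OF I] lspan.span_smul) fact+
  ultimately show "c \<cdot> x \<in> ideal_plus_span I B" by simp
qed

lemma lspan_Un_ideal: "lspan L (I \<union> B) = ideal_plus_span I B"
proof
  have "I \<union> B \<subseteq> ideal_plus_span I B"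
  proof
    fix x assume "x \<in> I \<union> B"
    then show "x \<in> ideal_plus_span I B"
    proof
      assume "x \<in> I"
      then have "x \<oplus> \<zero> \<in> ideal_plus_span I B"
        by (intro ideal_plus_spanI lspan.span_zero)
      then show ?thesis using \<open>x \<in> I\<close> lie_idealD(1)[OF I] by auto
    next
      assume "x \<in> B"
      then have "\<zero> \<oplus> x \<in> ideal_plus_span I B"
        by (intro ideal_plus_spanI lie_idealD(2)[OF I] lspan.span_base)
      then show ?thesis using \<open>x \<in> B\<close> B by auto
    qed
  qed
  then show "lspan L (I \<union> B) \<subseteq> ideal_plus_span I B"
    by (rule lspan_least[OF lsubspace_ideal_plus_span])
next
  show "ideal_plus_span I B \<subseteq> lspan L (I \<union> B)"
  proof
    fix x assume "x \<in> ideal_plus_span I B"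
    then obtain i s where "i \<in> I" "s \<in> lspan L B" "x = i \<oplus> s"
      by (elim ideal_plus_spanE)
    moreover have "lspan L B \<subseteq> lspan L (I \<union> B)" by (rule lspan_mono) blast
    ultimately show "x \<in> lspan L (I \<union> B)" by (auto intro: lspan.intros)
  qed
qed

text \<open>Modulo the ideal, a bracket of two elements of \<open>I + span B\<close> is a bracket of two
  elements of \<open>span B\<close>.\<close>
lemma ideal_plus_span_lbr_closed:
  assumes gen: "\<And>b b'. b \<in> B \<Longrightarrow> b' \<in> B \<Longrightarrow> br b b' \<in> ideal_plus_span I B"
    and x: "x \<in> ideal_plus_span I B" and y: "y \<in> ideal_plus_span I B"
  shows "br x y \<in> ideal_plus_span I B"
proof -
  obtain i s j t where "i \<in> I" "s \<in> lspan L B" "j \<in> I" "t \<in> lspan L B"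
    and C: "i \<in> C" "s \<in> C" "j \<in> C" "t \<in> C" and xy: "x = i \<oplus> s" "y = j \<oplus> t"
    using x y by (elim ideal_plus_spanE)
  have "br s t \<in> ideal_plus_span I B"
    by (rule lbr_lspan_closed[OF lsubspace_ideal_plus_span B])
      (use gen \<open>s \<in> lspan L B\<close> \<open>t \<in> lspan L B\<close> in auto)
  then obtain k u where k: "k \<in> I" "k \<in> C" and u: "u \<in> lspan L B" "u \<in> C"
    and st: "br s t = k \<oplus> u"
    by (elim ideal_plus_spanE)
  have "br i j \<in> I" "br i t \<in> I" "br s j \<in> I"
    using lie_idealD(5)[OF I] lie_ideal_lbr_right[OF I] \<open>i \<in> I\<close> \<open>j \<in> I\<close> C by auto
  then have "(br i j \<oplus> br s j \<oplus> (br i t \<oplus> k)) \<oplus> u \<in> ideal_plus_span I B"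
    by (intro ideal_plus_spanI lie_idealD(3)[OF I]) (simp_all add: k u)
  moreover have "br x y = (br i j \<oplus> br s j \<oplus> (br i t \<oplus> k)) \<oplus> u"
    using C k u st xy
    by (simp add: lbr_ladd_left lbr_ladd_right ladd_assoc)
  ultimately show ?thesis by simp
qed

lemma lie_gen_subset_ideal_plus_span:
  assumes "\<And>b b'. b \<in> B \<Longrightarrow> b' \<in> B \<Longrightarrow> br b b' \<in> ideal_plus_span I B"
    and "A \<subseteq> ideal_plus_span I B"
  shows "lie_gen L A \<subseteq> ideal_plus_span I B"
  by (rule lie_gen_least[OF lsubspace_ideal_plus_span ideal_plus_span_lbr_closed])
    (use assms in auto)

end

text \<open>The generators and the brackets of a finite complement of \<open>J\<close> lie in \<open>J + span B\<close>;
  the finitely many \<open>J\<close>-components involved generate an ideal \<open>I\<close> for which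
  \<open>I + span B\<close> is already a subalgebra, hence all of \<open>L\<close>.\<close>
lemma finite_codim_ideal_contains_finitely_generated:
  assumes A: "finite A" "lie_gen L A = C"
    and J: "lie_ideal L J" and "finite_codim L J"
  shows "\<exists>F. finite F \<and> F \<subseteq> J \<and> finite_codim L (ideal_generated F)"
proof -
  obtain B where B: "finite B" "B \<subseteq> C" "C \<subseteq> ideal_plus_span J B"
    using \<open>finite_codim L J\<close> lspan_Un_ideal[OF J] unfolding finite_codim_def by auto
  define G where "G = A \<union> (\<lambda>(b, b'). br b b') ` (B \<times> B)"
  have A_C: "A \<subseteq> C" using lie_gen.gen_base[of _ A L] A(2) by auto
  have "finite G" "G \<subseteq> C" using A(1) A_C B(1,2) unfolding G_def by (auto simp: subset_iff)
  have "\<forall>g\<in>G. \<exists>j. j \<in> J \<and> (\<exists>s\<in>lspan L B. g = j \<oplus> s)"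
  proof
    fix g assume "g \<in> G"
    with \<open>G \<subseteq> C\<close> B(3) have "g \<in> ideal_plus_span J B" by blast
    then show "\<exists>j. j \<in> J \<and> (\<exists>s\<in>lspan L B. g = j \<oplus> s)"
      by (elim ideal_plus_spanE[OF J B(2)]) blast
  qed
  then obtain comp where comp: "\<And>g. g \<in> G \<Longrightarrow> comp g \<in> J \<and> (\<exists>s\<in>lspan L B. g = comp g \<oplus> s)"
    by metis
  define I where "I = ideal_generated (comp ` G)"
  have "comp ` G \<subseteq> J" using comp by blast
  then have I: "lie_ideal L I"
    unfolding I_def using lie_idealD(1)[OF J] by (intro lie_ideal_generated) blast
  have G_I: "G \<subseteq> ideal_plus_span I B"
  proof
    fix g assume "g \<in> G"
    then obtain s where "s \<in> lspan L B" "g = comp g \<oplus> s" using comp by blast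
    moreover have "comp g \<in> I"
      using \<open>g \<in> G\<close> ideal_generated_superset unfolding I_def by blast
    ultimately show "g \<in> ideal_plus_span I B" by (metis ideal_plus_spanI)
  qed
  have "C \<subseteq> ideal_plus_span I B"
    unfolding A(2)[symmetric] using G_I
    by (intro lie_gen_subset_ideal_plus_span[OF I B(2)]) (auto simp: G_def)
  then have "finite_codim L I"
    unfolding finite_codim_def lspan_Un_ideal[OF I B(2), symmetric] using B(1,2) by blast
  then show ?thesis using \<open>finite G\<close> \<open>comp ` G \<subseteq> J\<close> unfolding I_def by blast
qed

lemma exists_maximal_ideal_infinite_codim:
  assumes A: "finite A" "lie_gen L A = C" and "infinite_dimensional L"
  shows "\<exists>I. lie_ideal L I \<and> \<not> finite_codim L I \<and>
    (\<forall>J. lie_ideal L J \<and> I \<subset> J \<longrightarrow> finite_codim L J)"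
proof -
  define \<P> where "\<P> = {I. lie_ideal L I \<and> \<not> finite_codim L I}"
  have "\<exists>I\<in>\<P>. \<forall>J\<in>\<P>. I \<subseteq> J \<longrightarrow> J = I"
  proof (rule subset_Zorn_nonempty)
    show "\<P> \<noteq> {}"
      using lie_ideal_lzero infinite_dimensional_imp_not_finite_codim_lzero[OF assms(3)]
      unfolding \<P>_def by blast
  next
    fix \<I> assume "\<I> \<noteq> {}" "subset.chain \<P> \<I>"
    then have chain: "subset.chain {I. lie_ideal L I} \<I>" and sub: "\<I> \<subseteq> \<P>"
      unfolding subset_chain_def \<P>_def by blast+
    have ideal: "lie_ideal L (\<Union>\<I>)" by (rule lie_ideal_Union_chain[OF chain \<open>\<I> \<noteq> {}\<close>])
    have "\<not> finite_codim L (\<Union>\<I>)"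
    proof
      assume "finite_codim L (\<Union>\<I>)"
      then obtain F where F: "finite F" "F \<subseteq> \<Union>\<I>" "finite_codim L (ideal_generated F)"
        using finite_codim_ideal_contains_finitely_generated[OF A ideal] by blast
      then obtain K where K: "K \<in> \<I>" "F \<subseteq> K"
        using finite_subset_Union_chain[OF F(1,2) \<open>\<I> \<noteq> {}\<close> chain] by blast
      then have "lie_ideal L K" "\<not> finite_codim L K" using sub unfolding \<P>_def by blast+
      then show False
        using ideal_generated_least[of K F] K(2) F(3) finite_codim_mono by blast
    qed
    then show "\<Union>\<I> \<in> \<P>" using ideal unfolding \<P>_def by blast
  qed
  then show ?thesis unfolding \<P>_def by blast
qed

section \<open>Homomorphisms and quotients\<close>

context
  fixes M :: "('k, 'c) lie_alg" and f :: "'b \<Rightarrow> 'c"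
  assumes M: "lie_algebra M" and f: "lie_hom L M f"
begin

lemma lie_homD:
  shows "x \<in> C \<Longrightarrow> f x \<in> lcarrier M"
    and "x \<in> C \<Longrightarrow> y \<in> C \<Longrightarrow> f (x \<oplus> y) = ladd M (f x) (f y)"
    and "x \<in> C \<Longrightarrow> f (c \<cdot> x) = lsmul M c (f x)"
    and "x \<in> C \<Longrightarrow> y \<in> C \<Longrightarrow> f (br x y) = lbr M (f x) (f y)"
  using f unfolding lie_hom_def by blast+

lemma lie_hom_lzero: "f \<zero> = lzero M"
proof (rule liealg.ladd_idem_imp_lzero[OF liealg.intro[OF M]])
  show "f \<zero> \<in> lcarrier M" by (simp add: lie_homD(1))
  show "ladd M (f \<zero>) (f \<zero>) = f \<zero>" using lie_homD(2)[of \<zero> \<zero>] by simp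
qed

lemma lie_hom_lspan:
  assumes "X \<subseteq> C" "x \<in> lspan L X"
  shows "f x \<in> lspan M (f ` X)"
  using assms(2)
proof induction
  case span_zero
  then show ?case by (simp add: lie_hom_lzero lspan.span_zero)
next
  case (span_add x y)
  moreover from this have "x \<in> C" "y \<in> C" using lspan_subset_carrier[OF assms(1)] by auto
  ultimately show ?case by (auto simp: lie_homD(2) intro: lspan.span_add)
next
  case (span_smul x c)
  moreover from this have "x \<in> C" using lspan_subset_carrier[OF assms(1)] by auto
  ultimately show ?case by (auto simp: lie_homD(3) intro: lspan.span_smul)
qed (auto intro: lspan.span_base)

lemma lie_ideal_vimage:
  assumes J: "lie_ideal M J"
  shows "lie_ideal L {x \<in> C. f x \<in> J}"
  unfolding lie_ideal_def
proof (intro conjI ballI allI)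
  show "\<zero> \<in> {x \<in> C. f x \<in> J}" using J by (simp add: lie_hom_lzero lie_ideal_def)
next
  fix x y assume "x \<in> {x \<in> C. f x \<in> J}" "y \<in> {x \<in> C. f x \<in> J}"
  then show "x \<oplus> y \<in> {x \<in> C. f x \<in> J}"
    using J unfolding lie_ideal_def by (simp add: lie_homD(2))
next
  fix c x assume "x \<in> {x \<in> C. f x \<in> J}"
  then show "c \<cdot> x \<in> {x \<in> C. f x \<in> J}"
    using J unfolding lie_ideal_def by (simp add: lie_homD(3))
next
  fix x a assume "x \<in> C" "a \<in> {x \<in> C. f x \<in> J}"
  then show "br x a \<in> {x \<in> C. f x \<in> J}"
    using J unfolding lie_ideal_def by (simp add: lie_homD(1,4))
qed blast

lemma finite_codim_image:
  assumes surj: "f ` C = lcarrier M" and K: "K \<subseteq> C" "finite_codim L K" and "f ` K \<subseteq> J"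
  shows "finite_codim M J"
proof -
  obtain B where B: "finite B" "B \<subseteq> C" "C \<subseteq> lspan L (K \<union> B)"
    using K(2) unfolding finite_codim_def by blast
  have "lcarrier M \<subseteq> lspan M (J \<union> f ` B)"
  proof
    fix y assume "y \<in> lcarrier M"
    then obtain x where "x \<in> C" "y = f x" using surj by blast
    then have "y \<in> lspan M (f ` (K \<union> B))"
      using lie_hom_lspan[of "K \<union> B" x] K(1) B(2,3) by blast
    moreover have "lspan M (f ` (K \<union> B)) \<subseteq> lspan M (J \<union> f ` B)"
      using \<open>f ` K \<subseteq> J\<close> by (intro lspan_mono) blast
    ultimately show "y \<in> lspan M (J \<union> f ` B)" by blast
  qed
  moreover have "f ` B \<subseteq> lcarrier M" using B(2) surj by blast
  ultimately show ?thesis unfolding finite_codim_def using B(1) by blast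
qed

end

definition cong_ideal :: "'b set \<Rightarrow> 'b \<Rightarrow> 'b \<Rightarrow> bool" where
  "cong_ideal I x y \<longleftrightarrow> (\<exists>i\<in>I. y = x \<oplus> i)"

definition coset :: "'b set \<Rightarrow> 'b \<Rightarrow> 'b set" where
  "coset I x = {y \<in> C. cong_ideal I x y}"

definition coset_rep :: "'b set \<Rightarrow> 'b set \<Rightarrow> 'b" where
  "coset_rep I X = (SOME x. x \<in> C \<and> coset I x = X)"

definition lie_quotient :: "'b set \<Rightarrow> ('k, 'b set) lie_alg" where
  "lie_quotient I = \<lparr>lcarrier = coset I ` C,
     ladd = \<lambda>X Y. coset I (coset_rep I X \<oplus> coset_rep I Y),
     lzero = coset I \<zero>,
     lsmul = \<lambda>c X. coset I (c \<cdot> coset_rep I X),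
     lbr = \<lambda>X Y. coset I (br (coset_rep I X) (coset_rep I Y))\<rparr>"

context
  fixes I
  assumes I: "lie_ideal L I"
begin

lemma cong_idealE:
  assumes "cong_ideal I x y"
  obtains i where "i \<in> I" "i \<in> C" "y = x \<oplus> i"
  using assms lie_idealD(1)[OF I] unfolding cong_ideal_def by blast

lemma cong_ideal_refl: "x \<in> C \<Longrightarrow> cong_ideal I x x"
  unfolding cong_ideal_def using lie_idealD(2)[OF I] by force

lemma cong_ideal_sym:
  assumes "x \<in> C" "cong_ideal I x y"
  shows "cong_ideal I y x"
proof -
  obtain i where i: "i \<in> I" "y = x \<oplus> i" using assms unfolding cong_ideal_def by blast
  have "i \<in> C" using i lie_idealD(1)[OF I] by blast
  then have "y \<oplus> (-1) \<cdot> i = x" using i assms by (simp add: ladd_assoc ladd_minus_one)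
  then show ?thesis unfolding cong_ideal_def using lie_idealD(4)[OF I i(1)] by metis
qed

lemma cong_ideal_trans:
  assumes "x \<in> C" "cong_ideal I x y" "cong_ideal I y z"
  shows "cong_ideal I x z"
proof -
  obtain i where i: "i \<in> I" "i \<in> C" "y = x \<oplus> i" using assms(2) by (elim cong_idealE)
  obtain j where j: "j \<in> I" "j \<in> C" "z = y \<oplus> j" using assms(3) by (elim cong_idealE)
  have "z = x \<oplus> (i \<oplus> j)" using i j assms(1) by (simp add: ladd_assoc)
  then show ?thesis unfolding cong_ideal_def using lie_idealD(3)[OF I i(1) j(1)] by blast
qed

lemma cong_ideal_ladd:
  assumes C: "x \<in> C" "y \<in> C" and "cong_ideal I x x'" "cong_ideal I y y'"
  shows "cong_ideal I (x \<oplus> y) (x' \<oplus> y')"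
proof -
  obtain i j where ij: "i \<in> I" "j \<in> I" "i \<in> C" "j \<in> C" "x' = x \<oplus> i" "y' = y \<oplus> j"
    using assms(3,4) by (elim cong_idealE)
  then have "x' \<oplus> y' = (x \<oplus> y) \<oplus> (i \<oplus> j)" using C by (simp add: ladd_assoc ladd_left_commute)
  then show ?thesis unfolding cong_ideal_def using lie_idealD(3)[OF I ij(1,2)] by blast
qed

lemma cong_ideal_lsmul:
  assumes "x \<in> C" "cong_ideal I x x'"
  shows "cong_ideal I (c \<cdot> x) (c \<cdot> x')"
proof -
  obtain i where i: "i \<in> I" "i \<in> C" "x' = x \<oplus> i" using assms(2) by (elim cong_idealE)
  then have "c \<cdot> x' = c \<cdot> x \<oplus> c \<cdot> i" using assms(1) by (simp add: lsmul_ladd)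
  then show ?thesis unfolding cong_ideal_def using lie_idealD(4)[OF I i(1)] by blast
qed

lemma cong_ideal_lbr:
  assumes C: "x \<in> C" "y \<in> C" and "cong_ideal I x x'" "cong_ideal I y y'"
  shows "cong_ideal I (br x y) (br x' y')"
proof -
  obtain i j where ij: "i \<in> I" "j \<in> I" "i \<in> C" "j \<in> C" "x' = x \<oplus> i" "y' = y \<oplus> j"
    using assms(3,4) by (elim cong_idealE)
  have "br i y \<in> I" "br x j \<in> I" "br i j \<in> I"
    using lie_idealD(5)[OF I] lie_ideal_lbr_right[OF I] ij C by auto
  then have "br i y \<oplus> (br x j \<oplus> br i j) \<in> I" using lie_idealD(3)[OF I] by blast
  moreover have "br x' y' = br x y \<oplus> (br i y \<oplus> (br x j \<oplus> br i j))"
    using ij C by (simp add: lbr_ladd_left lbr_ladd_right ladd_assoc)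
  ultimately show ?thesis unfolding cong_ideal_def by blast
qed

lemma coset_eq_iff:
  assumes x: "x \<in> C" and y: "y \<in> C"
  shows "coset I x = coset I y \<longleftrightarrow> cong_ideal I x y"
proof
  assume "coset I x = coset I y"
  moreover have "y \<in> coset I y" using y cong_ideal_refl unfolding coset_def by blast
  ultimately show "cong_ideal I x y" unfolding coset_def by blast
next
  assume xy: "cong_ideal I x y"
  then have yx: "cong_ideal I y x" by (rule cong_ideal_sym[OF x])
  show "coset I x = coset I y"
    unfolding coset_def using cong_ideal_trans[OF x xy] cong_ideal_trans[OF y yx] by blast
qed

lemma coset_eq_lzero_iff:
  assumes x: "x \<in> C"
  shows "coset I x = coset I \<zero> \<longleftrightarrow> x \<in> I"
proof -
  have "coset I x = coset I \<zero> \<longleftrightarrow> cong_ideal I \<zero> x"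
    using coset_eq_iff[OF x lzero_closed] cong_ideal_sym[OF x] cong_ideal_sym[OF lzero_closed]
    by blast
  also have "\<dots> \<longleftrightarrow> x \<in> I"
  proof
    assume "cong_ideal I \<zero> x"
    then obtain i where "i \<in> I" "i \<in> C" "x = \<zero> \<oplus> i" by (elim cong_idealE)
    then show "x \<in> I" by simp
  next
    assume "x \<in> I"
    then show "cong_ideal I \<zero> x" unfolding cong_ideal_def using x by force
  qed
  finally show ?thesis .
qed

lemma coset_rep:
  assumes x: "x \<in> C"
  shows "coset_rep I (coset I x) \<in> C" "cong_ideal I x (coset_rep I (coset I x))"
proof -
  have "coset_rep I (coset I x) \<in> C \<and> coset I (coset_rep I (coset I x)) = coset I x"
    unfolding coset_rep_def by (rule someI_ex) (use x in blast)
  then have rep: "coset_rep I (coset I x) \<in> C" "coset I (coset_rep I (coset I x)) = coset I x"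
    by simp_all
  then show "coset_rep I (coset I x) \<in> C" "cong_ideal I x (coset_rep I (coset I x))"
    using coset_eq_iff[OF x rep(1)] by simp_all
qed

lemma quotient_carrier: "lcarrier (lie_quotient I) = coset I ` C"
  and quotient_lzero: "lzero (lie_quotient I) = coset I \<zero>"
  unfolding lie_quotient_def by simp_all

lemma quotient_ladd:
  assumes "x \<in> C" "y \<in> C"
  shows "ladd (lie_quotient I) (coset I x) (coset I y) = coset I (x \<oplus> y)"
proof -
  have "coset I (x \<oplus> y) = coset I (coset_rep I (coset I x) \<oplus> coset_rep I (coset I y))"
    using assms coset_rep[of x] coset_rep[of y] by (simp add: coset_eq_iff cong_ideal_ladd)
  then show ?thesis by (simp add: lie_quotient_def)
qed

lemma quotient_lsmul:
  assumes "x \<in> C"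
  shows "lsmul (lie_quotient I) c (coset I x) = coset I (c \<cdot> x)"
proof -
  have "coset I (c \<cdot> x) = coset I (c \<cdot> coset_rep I (coset I x))"
    using assms coset_rep[of x] by (simp add: coset_eq_iff cong_ideal_lsmul)
  then show ?thesis by (simp add: lie_quotient_def)
qed

lemma quotient_lbr:
  assumes "x \<in> C" "y \<in> C"
  shows "lbr (lie_quotient I) (coset I x) (coset I y) = coset I (br x y)"
proof -
  have "coset I (br x y) = coset I (br (coset_rep I (coset I x)) (coset_rep I (coset I y)))"
    using assms coset_rep[of x] coset_rep[of y] by (simp add: coset_eq_iff cong_ideal_lbr)
  then show ?thesis by (simp add: lie_quotient_def)
qed

lemma lie_algebra_quotient: "lie_algebra (lie_quotient I)"
proof -
  have ball_coset: "(\<forall>X\<in>coset I ` C. P X) \<longleftrightarrow> (\<forall>x\<in>C. P (coset I x))" for P by blast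
  have inverse: "\<forall>X\<in>coset I ` C. \<exists>Y\<in>coset I ` C. ladd (lie_quotient I) X Y = coset I \<zero>"
  proof
    fix X assume "X \<in> coset I ` C"
    then obtain x where x: "x \<in> C" "X = coset I x" by blast
    then obtain y where "y \<in> C" "x \<oplus> y = \<zero>" using ladd_right_inverse by blast
    then show "\<exists>Y\<in>coset I ` C. ladd (lie_quotient I) X Y = coset I \<zero>"
      using x quotient_ladd by force
  qed
  show ?thesis
    unfolding lie_algebra_def Let_def quotient_carrier quotient_lzero
    by (intro conjI; use inverse jacobi in \<open>simp add: ball_coset quotient_ladd quotient_lsmul quotient_lbr
        ladd_assoc lsmul_ladd lsmul_plus lsmul_mult lbr_ladd_left lbr_ladd_right lbr_lsmul_left
        lbr_lsmul_right\<close>; simp add: ladd_commute)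
qed

lemma lie_hom_coset: "lie_hom L (lie_quotient I) (coset I)"
  unfolding lie_hom_def by (simp add: quotient_carrier quotient_ladd quotient_lsmul quotient_lbr)

lemma lspan_quotient_cosets:
  assumes "B \<subseteq> C" "X \<in> lspan (lie_quotient I) (coset I ` B)"
  shows "\<exists>y\<in>lspan L B. X = coset I y"
  using assms(2)
proof induction
  case span_zero
  then show ?case by (auto simp: quotient_lzero intro: lspan.span_zero)
next
  case (span_base X)
  then show ?case by (auto intro: lspan.span_base)
next
  case (span_add X Y)
  then obtain x y where "x \<in> lspan L B" "y \<in> lspan L B" "X = coset I x" "Y = coset I y"
    by blast
  moreover from this have "x \<in> C" "y \<in> C" using lspan_subset_carrier[OF assms(1)] by auto
  ultimately show ?case by (auto simp: quotient_ladd intro: lspan.span_add)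
next
  case (span_smul X c)
  then obtain x where "x \<in> lspan L B" "X = coset I x" by blast
  moreover from this have "x \<in> C" using lspan_subset_carrier[OF assms(1)] by auto
  ultimately show ?case by (auto simp: quotient_lsmul intro: lspan.span_smul)
qed

lemma infinite_dimensional_quotient:
  assumes "\<not> finite_codim L I"
  shows "infinite_dimensional (lie_quotient I)"
  unfolding infinite_dimensional_def
proof
  assume "\<exists>\<B>. finite \<B> \<and> \<B> \<subseteq> lcarrier (lie_quotient I) \<and> lcarrier (lie_quotient I) \<subseteq> lspan (lie_quotient I) \<B>"
  then obtain B where B: "finite B" "B \<subseteq> C" "coset I ` C \<subseteq> lspan (lie_quotient I) (coset I ` B)"
    unfolding quotient_carrier by (metis finite_subset_image)
  have "C \<subseteq> lspan L (I \<union> B)"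
  proof
    fix x assume "x \<in> C"
    then obtain y where y: "y \<in> lspan L B" "coset I x = coset I y"
      using lspan_quotient_cosets[OF B(2)] B(3) by blast
    then have "y \<in> C" using lspan_subset_carrier[OF B(2)] by blast
    then obtain i where "i \<in> I" "x = y \<oplus> i"
      using y(2) coset_eq_iff[OF _ \<open>x \<in> C\<close>] cong_idealE by metis
    moreover have "y \<in> lspan L (I \<union> B)" using y(1) lspan_mono[of B "I \<union> B"] by blast
    ultimately show "x \<in> lspan L (I \<union> B)" by (auto intro: lspan.intros)
  qed
  then show False using assms B(1,2) unfolding finite_codim_def by blast
qed

lemma just_infinite_quotient:
  assumes "\<not> finite_codim L I"
    and maximal: "\<And>J. lie_ideal L J \<Longrightarrow> I \<subset> J \<Longrightarrow> finite_codim L J"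
  shows "just_infinite (lie_quotient I)"
  unfolding just_infinite_def
proof (intro conjI allI impI)
  show "infinite_dimensional (lie_quotient I)" by (rule infinite_dimensional_quotient[OF assms(1)])
next
  fix J assume J: "lie_ideal (lie_quotient I) J \<and> J \<noteq> {lzero (lie_quotient I)}"
  define K where "K = {x \<in> C. coset I x \<in> J}"
  have K: "lie_ideal L K"
    unfolding K_def using J lie_ideal_vimage[OF lie_algebra_quotient lie_hom_coset] by blast
  have J_sub: "J \<subseteq> coset I ` C" and J_zero: "coset I \<zero> \<in> J"
    using J unfolding lie_ideal_def quotient_carrier quotient_lzero by blast+
  have "I \<subseteq> K"
  proof
    fix i assume "i \<in> I"
    moreover from this have "i \<in> C" using lie_idealD(1)[OF I] by blast
    ultimately have "coset I i = coset I \<zero>" using coset_eq_lzero_iff by blast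
    then show "i \<in> K" unfolding K_def using J_zero \<open>i \<in> C\<close> by simp
  qed
  moreover obtain x where "x \<in> C" "coset I x \<in> J" "coset I x \<noteq> coset I \<zero>"
    using J J_sub J_zero unfolding quotient_lzero by blast
  then have "x \<in> K - I" unfolding K_def using coset_eq_lzero_iff by blast
  ultimately have "finite_codim L K" using maximal[OF K] by blast
  then show "finite_codim (lie_quotient I) J"
    using finite_codim_image[OF lie_algebra_quotient lie_hom_coset quotient_carrier[symmetric]]
      lie_idealD(1)[OF K] unfolding K_def by blast
qed

end

end

theorem lemma4:
  fixes L :: "('k::field, 'b) lie_alg" and A :: "'b set"
  assumes "lie_algebra L"
    and "infinite_dimensional L"
    and "finite A" and "A \<subseteq> lcarrier L"
    and "lie_gen L A = lcarrier L"
    and "\<forall>s\<in>lie_set L A. ad_nilpotent L s"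
  shows "\<exists>(M :: ('k, 'b set) lie_alg) (f :: 'b \<Rightarrow> 'b set).
           lie_algebra M \<and> lie_hom L M f \<and> f ` lcarrier L = lcarrier M \<and> just_infinite M"
proof -
  interpret liealg L by (rule liealg.intro) fact
  obtain I where I: "lie_ideal L I" "\<not> finite_codim L I"
    and maximal: "\<And>J. lie_ideal L J \<Longrightarrow> I \<subset> J \<Longrightarrow> finite_codim L J"
    using exists_maximal_ideal_infinite_codim[OF assms(3,5,2)] by blast
  show ?thesis
    using lie_algebra_quotient[OF I(1)] lie_hom_coset[OF I(1)] quotient_carrier[OF I(1)]
      just_infinite_quotient[OF I maximal] by metis
qed

end
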